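(* There is an absolute constant $C>0$ such that the following holds. Let $\pi\in(0,1)$ and $\delta:=\pi/(C\max\{1,\log(1/\pi)\})$. Suppose the Robust protocol (described in the context) is run with parameters for which it has per-round $(\varepsilon,\delta)$ accuracy. Then it has $(\varepsilon,\pi)$ per-event-index accuracy: for every event index $n\ge1$ and every event stream, $\Pr[|\hat n(n)-n|>\varepsilon n]\le\pi$.
   Context: Distributed counting: a server and $k$ sites; events arrive one at a time, each at some site; $n_i$ is the number of events at site $i$ so far and the event count is $n=\sum_in_i$. Robust protocol with parameters $k$, $\varepsilon>0$, $c\ge1$: each site $i$ keeps a transmission probability $p$ (initially $1$, updated by server broadcasts) and its count $n_i$. On each event at site $i$: $n_i\gets n_i+1$, and independently with probability $p$ the site sends ReportSample to the server. On receiving CountRequest, site $i$ sends its current $n_i$. The server keeps a counter $B=0$, values $\bar n_i=0$, and $p=1$; its estimate is $\hat n=\bar n+B/p$ with $\bar n=\sum_i\bar n_i$. On receiving ReportSample the server sets $B\gets B+1$; if now $B=k$, the round ends and a new round begins: the server broadcasts CountRequest, sets each $\bar n_i$ to the reported exact $n_i$, sets $p\gets\min\{1,c\sqrt k/(\varepsilon\bar n)\}$, broadcasts $p$, and sets $B\gets0$. $\hat n(n)$ is the estimate right after the $n$-th event. Per-round $(\varepsilon,\delta)$ accuracy means: for each round, independently of the history before it starts, with probability at least $1-\delta$ the relative error $|\hat n(n)-n|/n$ is at most $\varepsilon$ at every event index $n$ that falls in that round. *)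

theory Defs
  imports "HOL-Probability.Probability"
begin

text \<open>Joint state of the Robust protocol (sites and server; messages are delivered
synchronously, so every site's p equals the server's p).
  cnt i   : exact count n_i at site i
  nb i    : server's value nbar_i
  sB      : server counter B
  sp      : current transmission probability p
  fresh   : a new round has just begun (initially, or the last event ended a round)\<close>
record rstate =
  cnt :: "nat \<Rightarrow> nat"
  nb :: "nat \<Rightarrow> nat"
  sB :: nat
  sp :: real
  fresh :: bool

definition rinit :: rstate where
  "rinit = \<lparr>cnt = (\<lambda>_. 0), nb = (\<lambda>_. 0), sB = 0, sp = 1, fresh = True\<rparr>"

definition rest :: "nat \<Rightarrow> rstate \<Rightarrow> real" where
  "rest k \<sigma> = real (\<Sum>i<k. nb \<sigma> i) + real (sB \<sigma>) / sp \<sigma>"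

definition rstep :: "nat \<Rightarrow> real \<Rightarrow> real \<Rightarrow> nat \<Rightarrow> rstate \<Rightarrow> rstate pmf" where
  "rstep k eps c i \<sigma> =
     (let cnt' = (cnt \<sigma>)(i := cnt \<sigma> i + 1) in
      map_pmf (\<lambda>b.
        if \<not> b then \<sigma>\<lparr>cnt := cnt', fresh := False\<rparr>
        else if sB \<sigma> + 1 = k then
          \<lparr>cnt = cnt', nb = cnt', sB = 0,
           sp = min 1 (c * sqrt (real k) / (eps * real (\<Sum>j<k. cnt' j))),
           fresh = True\<rparr>
        else \<sigma>\<lparr>cnt := cnt', sB := sB \<sigma> + 1, fresh := False\<rparr>)
      (bernoulli_pmf (sp \<sigma>)))"

text \<open>Event stream: the j-th event (j >= 1) arrives at site s j.\<close>
definition valid_stream :: "nat \<Rightarrow> (nat \<Rightarrow> nat) \<Rightarrow> bool" where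
  "valid_stream k s \<longleftrightarrow> (\<forall>j\<ge>1. s j < k)"

fun rrun :: "nat \<Rightarrow> real \<Rightarrow> real \<Rightarrow> (nat \<Rightarrow> nat) \<Rightarrow> nat \<Rightarrow> rstate pmf" where
  "rrun k eps c s 0 = return_pmf rinit"
| "rrun k eps c s (Suc n) = bind_pmf (rrun k eps c s n) (rstep k eps c (s (Suc n)))"

text \<open>Starting in state sigma right after event m, the distribution of the list of
states right after events m+1, ..., m+N.\<close>
fun rtraj :: "nat \<Rightarrow> real \<Rightarrow> real \<Rightarrow> (nat \<Rightarrow> nat) \<Rightarrow> nat \<Rightarrow> rstate \<Rightarrow> nat \<Rightarrow> rstate list pmf" where
  "rtraj k eps c s m \<sigma> 0 = return_pmf []"
| "rtraj k eps c s m \<sigma> (Suc N) =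
     bind_pmf (rstep k eps c (s (Suc m)) \<sigma>)
       (\<lambda>\<sigma>'. map_pmf (Cons \<sigma>') (rtraj k eps c s (Suc m) \<sigma>' N))"

text \<open>For a round starting right after event m, trajectory ts: every event index m+j+1
falling in that round (no earlier event of ts ended the round) has relative error <= eps.\<close>
definition round_good :: "nat \<Rightarrow> real \<Rightarrow> nat \<Rightarrow> rstate list \<Rightarrow> bool" where
  "round_good k eps m ts \<longleftrightarrow>
     (\<forall>j<length ts. (\<forall>i<j. \<not> fresh (ts ! i)) \<longrightarrow>
        \<bar>rest k (ts ! j) - real (m + j + 1)\<bar> \<le> eps * real (m + j + 1))"

text \<open>Per-round (eps,delta) accuracy: for every stream, every round, conditioned on any
(positive-probability) history up to the round start -- by the Markov property, on the
state at the round start -- with probability >= 1 - delta every event index of the round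
has relative error <= eps.  Finite horizons N are quantified over (equivalent to the
infinite-horizon event by continuity of measure).\<close>
definition per_round_accurate :: "nat \<Rightarrow> real \<Rightarrow> real \<Rightarrow> real \<Rightarrow> bool" where
  "per_round_accurate k eps c \<delta> \<longleftrightarrow>
     (\<forall>s m \<sigma> N. valid_stream k s \<longrightarrow> \<sigma> \<in> set_pmf (rrun k eps c s m) \<longrightarrow> fresh \<sigma> \<longrightarrow>
        measure_pmf.prob (rtraj k eps c s m \<sigma> N) {ts. round_good k eps m ts} \<ge> 1 - \<delta>)"

end

theory Submission
  imports Defs
begin

text \<open>Fix the event index \<open>n\<close> and a threshold \<open>a < n\<close>. If the estimate is inaccurate at \<open>n\<close>,
then either no round starts in \<open>[a, n)\<close>, or the round containing \<open>n\<close> starts at some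
\<open>m \<in> [a, n)\<close> and is itself inaccurate. Once \<open>a\<close> events have arrived the sampling probability is
at least \<open>\<rho>\<^sub>a = min 1 (c \<surd>k / (\<epsilon> a))\<close>, and the potential \<open>2^(k-1-B)\<close> shrinks in expectation by
the factor \<open>1 - p/2\<close> per event until a round ends; so the first case has probability at most
\<open>2^(k-1) (1 - \<rho>\<^sub>a/2)^(n-1-a)\<close>. By per-round accuracy and the union bound, the second case has
probability at most \<open>\<delta>\<close> times the expected number of round starts in \<open>[a, n)\<close>, which is at most
\<open>2 + (n-a) \<rho>\<^sub>a\<^sub>+\<^sub>1 / k\<close> because every later round needs \<open>k\<close> samples taken at rate at most
\<open>\<rho>\<^sub>a\<^sub>+\<^sub>1\<close>. Taking \<open>a\<close> largest with \<open>(n-1-a) \<rho>\<^sub>a \<ge> 2k + 2 ln (2/\<pi>)\<close> makes both terms at most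
\<open>\<pi>/2\<close>.\<close>

lemma measure_pmf_prob_bind:
  "measure_pmf.prob (bind_pmf M N) X = (\<integral>x. measure_pmf.prob (N x) X \<partial>M)"
proof -
  have "ennreal (measure_pmf.prob (bind_pmf M N) X) =
      (\<integral>\<^sup>+x. ennreal (measure_pmf.prob (N x) X) \<partial>M)"
    by (simp add: measure_pmf.emeasure_eq_measure[symmetric])
  also have "\<dots> = ennreal (\<integral>x. measure_pmf.prob (N x) X \<partial>M)"
    by (intro nn_integral_eq_integral measure_pmf.integrable_const_bound[where B=1]) auto
  finally show ?thesis
    by (simp add: integral_nonneg_AE)
qed

lemma measure_pmf_mono_on_support:
  assumes "\<And>x. x \<in> set_pmf p \<Longrightarrow> x \<in> A \<Longrightarrow> x \<in> B"
  shows "measure_pmf.prob p A \<le> measure_pmf.prob p B"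
  using assms by (intro measure_pmf.finite_measure_mono_AE) (auto simp: AE_measure_pmf_iff)

lemma measure_pmf_cong_on_support:
  assumes "\<And>x. x \<in> set_pmf p \<Longrightarrow> x \<in> A \<longleftrightarrow> x \<in> B"
  shows "measure_pmf.prob p A = measure_pmf.prob p B"
  using assms by (intro antisym measure_pmf_mono_on_support) auto

lemma integral_mono_finite_pmf:
  fixes f g :: "'a \<Rightarrow> real"
  assumes "finite (set_pmf p)" "\<And>x. x \<in> set_pmf p \<Longrightarrow> f x \<le> g x"
  shows "(\<integral>x. f x \<partial>p) \<le> (\<integral>x. g x \<partial>p)"
  using assms
  by (intro integral_mono_AE integrable_measure_pmf_finite) (auto simp: AE_measure_pmf_iff)

lemma sum_fun_upd_add:
  fixes f :: "'b \<Rightarrow> 'a::comm_monoid_add"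
  assumes "finite A" "x \<in> A"
  shows "(\<Sum>i\<in>A. (f(x := f x + d)) i) = (\<Sum>i\<in>A. f i) + d"
proof -
  have "(\<Sum>i\<in>A. (f(x := f x + d)) i) = (\<Sum>i\<in>A. f i + (if i = x then d else 0))"
    by (intro sum.cong) auto
  also have "\<dots> = (\<Sum>i\<in>A. f i) + d"
    using assms by (simp add: sum.distrib)
  finally show ?thesis .
qed

lemma exists_last_in_interval:
  fixes P :: "nat \<Rightarrow> bool"
  assumes "\<exists>i\<in>{a..<n}. P i"
  shows "\<exists>m\<in>{a..<n}. P m \<and> (\<forall>i\<in>{m<..<n}. \<not> P i)"
proof -
  define F where "F = {i \<in> {a..<n}. P i}"
  have "finite F" "F \<noteq> {}"
    using assms unfolding F_def by auto
  then have "Max F \<in> F" "\<And>i. i \<in> F \<Longrightarrow> i \<le> Max F"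
    by simp_all
  then have max: "Max F \<in> {a..<n}" "P (Max F)"
    and maximal: "\<And>i. i \<in> {a..<n} \<Longrightarrow> P i \<Longrightarrow> i \<le> Max F"
    unfolding F_def by auto
  have "\<not> P i" if "i \<in> {Max F<..<n}" for i
    using that max(1) maximal[of i] by auto
  then show ?thesis
    using max by blast
qed

lemma all_less_Suc_nth_Cons:
  "(\<forall>i<Suc n. P ((x # xs) ! i)) \<longleftrightarrow> P x \<and> (\<forall>i<n. P (xs ! i))"
  by (auto simp: less_Suc_eq_0_disj)

lemma exists_threshold:
  fixes g :: "nat \<Rightarrow> real" and K :: real
  assumes "1 \<le> n" "0 \<le> K" "\<And>a. g a \<le> 1"
  shows "\<exists>a<n. (1 \<le> a \<longrightarrow> K \<le> real (n - 1 - a) * g a) \<and> real (n - a) * g (Suc a) \<le> K + 2"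
proof -
  define S where "S = {a. 1 \<le> a \<and> a < n \<and> K \<le> real (n - 1 - a) * g a}"
  have upper: "real (n - a) * g (Suc a) \<le> K + 2" if "a < n" "Suc a \<notin> S" for a
  proof (cases "Suc a < n")
    case True
    then have "real (n - 1 - Suc a) * g (Suc a) < K"
      using that unfolding S_def by auto
    moreover have "real (n - a) * g (Suc a) = real (n - 1 - Suc a) * g (Suc a) + 2 * g (Suc a)"
      using True by (simp add: of_nat_diff algebra_simps)
    ultimately show ?thesis
      using assms(3)[of "Suc a"] by linarith
  next
    case False
    then have "n - a = 1"
      using that by simp
    then show ?thesis
      using assms(2) assms(3)[of "Suc a"] by simp
  qed
  show ?thesis
  proof (cases "S = {}")
    case True
    then show ?thesis
      using assms(1) upper[of 0] by (intro exI[of _ 0]) auto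
  next
    case False
    have "finite S"
      unfolding S_def by auto
    then have "Max S \<in> S" "Suc (Max S) \<notin> S"
      using False by (simp, metis Max_ge Suc_n_not_le_n)
    moreover from this(1) have "Max S < n" "K \<le> real (n - 1 - Max S) * g (Max S)"
      unfolding S_def by blast+
    ultimately show ?thesis
      using upper[of "Max S"] by blast
  qed
qed

lemma two_power_mult_decay_le:
  fixes r q :: real
  assumes "0 \<le> r" "r \<le> 1" "0 < q" "2 * real k + 2 * ln (1 / q) \<le> real t * r"
  shows "2 ^ (k - 1) * (1 - r / 2) ^ t \<le> q"
proof -
  have "(1 - r / 2) ^ t \<le> exp (- (r / 2)) ^ t"
    using assms(1,2) by (intro power_mono) (auto simp: exp_ge_add_one_self[of "- (r / 2)", simplified])
  also have "\<dots> = exp (- (real t * r) / 2)"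
    by (simp add: exp_of_nat_mult[symmetric])
  also have "\<dots> \<le> exp (- real k - ln (1 / q))"
    using assms(4) by simp
  also have "\<dots> = exp (- real k) * q"
    using assms(3) by (simp add: exp_diff exp_minus field_simps)
  finally have decay: "(1 - r / 2) ^ t \<le> exp (- real k) * q" .
  have "(2::real) ^ (k - 1) \<le> 2 ^ k"
    by (intro power_increasing) auto
  also have "\<dots> \<le> exp 1 ^ k"
    using exp_ge_add_one_self[of 1] by (intro power_mono) auto
  also have "\<dots> = exp (real k)"
    by (simp add: exp_of_nat_mult[symmetric])
  finally have "2 ^ (k - 1) * (1 - r / 2) ^ t \<le> exp (real k) * (exp (- real k) * q)"
    using decay assms(2) by (intro mult_mono) auto
  also have "\<dots> = q"
    by (simp add: exp_minus)
  finally show ?thesis .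
qed

definition final_state :: "rstate \<Rightarrow> rstate list \<Rightarrow> rstate" where
  "final_state \<sigma> ts = (if ts = [] then \<sigma> else last ts)"

lemma final_state_Nil [simp]: "final_state \<sigma> [] = \<sigma>"
  and final_state_Cons [simp]: "final_state \<sigma> (x # ts) = final_state x ts"
  and final_state_append: "final_state \<sigma> (ts @ us) = final_state (final_state \<sigma> ts) us"
  by (simp_all add: final_state_def)

text \<open>\<open>state_at ts i\<close> is the state right after event \<open>i\<close> when \<open>ts\<close> lists the states after
events \<open>1, 2, \<dots>\<close> of a run started in \<^const>\<open>rinit\<close>.\<close>
definition state_at :: "rstate list \<Rightarrow> nat \<Rightarrow> rstate" where
  "state_at ts i = (if i = 0 then rinit else ts ! (i - 1))"

lemma state_at_append_le: "length ts = m \<Longrightarrow> i \<le> m \<Longrightarrow> state_at (ts @ us) i = state_at ts i"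
  by (auto simp: state_at_def nth_append)

lemma state_at_append_gt:
  "length ts = m \<Longrightarrow> m < i \<Longrightarrow> state_at (ts @ us) i = us ! (i - m - 1)"
  by (auto simp: state_at_def nth_append)

lemma state_at_length: "length ts = m \<Longrightarrow> state_at ts m = final_state rinit ts"
  by (cases ts rule: rev_cases) (auto simp: state_at_def final_state_def nth_append)

definition round_start_of :: "nat \<Rightarrow> rstate list \<Rightarrow> nat \<Rightarrow> bool" where
  "round_start_of n ts m \<longleftrightarrow> fresh (state_at ts m) \<and> (\<forall>i\<in>{m<..<n}. \<not> fresh (state_at ts i))"

locale robust_run =
  fixes k :: nat and eps c :: real and s :: "nat \<Rightarrow> nat"
  assumes k_pos: "1 \<le> k" and eps_pos: "0 < eps" and c_pos: "0 < c"
    and valid: "valid_stream k s"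
begin

abbreviation traj :: "nat \<Rightarrow> rstate \<Rightarrow> nat \<Rightarrow> rstate list pmf" where
  "traj \<equiv> rtraj k eps c s"

abbreviation run :: "nat \<Rightarrow> rstate pmf" where
  "run \<equiv> rrun k eps c s"

definition inaccurate :: "nat \<Rightarrow> rstate \<Rightarrow> bool" where
  "inaccurate n \<sigma> \<longleftrightarrow> eps * real n < \<bar>rest k \<sigma> - real n\<bar>"

text \<open>The protocol's sampling probability after a round ending at event \<open>j\<close>; note that
\<open>sample_rate 0 = 0\<close>.\<close>
definition sample_rate :: "nat \<Rightarrow> real" where
  "sample_rate j = min 1 (c * sqrt (real k) / eps / real j)"

lemma sample_rate_nonneg: "0 \<le> sample_rate j"
  and sample_rate_le_1: "sample_rate j \<le> 1"
  using c_pos eps_pos by (simp_all add: sample_rate_def)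

lemma sample_rate_antimono: "1 \<le> i \<Longrightarrow> i \<le> j \<Longrightarrow> sample_rate j \<le> sample_rate i"
  unfolding sample_rate_def using c_pos eps_pos
  by (intro min.mono order_refl divide_left_mono) auto

definition step_with_coin :: "nat \<Rightarrow> rstate \<Rightarrow> bool \<Rightarrow> rstate" where
  "step_with_coin i \<sigma> b =
     (let cnt' = (cnt \<sigma>)(i := cnt \<sigma> i + 1) in
        if \<not> b then \<sigma>\<lparr>cnt := cnt', fresh := False\<rparr>
        else if sB \<sigma> + 1 = k then
          \<lparr>cnt = cnt', nb = cnt', sB = 0,
           sp = min 1 (c * sqrt (real k) / (eps * real (\<Sum>j<k. cnt' j))),
           fresh = True\<rparr>
        else \<sigma>\<lparr>cnt := cnt', sB := sB \<sigma> + 1, fresh := False\<rparr>)"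

lemma rstep_eq_map_bernoulli:
  "rstep k eps c i \<sigma> = map_pmf (step_with_coin i \<sigma>) (bernoulli_pmf (sp \<sigma>))"
  unfolding rstep_def step_with_coin_def Let_def by simp

lemma cnt_step_with_coin: "cnt (step_with_coin i \<sigma> b) = (cnt \<sigma>)(i := cnt \<sigma> i + 1)"
  by (simp add: step_with_coin_def Let_def)

lemma step_without_sample [simp]:
  "sB (step_with_coin i \<sigma> False) = sB \<sigma>"
  "sp (step_with_coin i \<sigma> False) = sp \<sigma>"
  "\<not> fresh (step_with_coin i \<sigma> False)"
  by (simp_all add: step_with_coin_def Let_def)

lemma step_sample_within_round:
  assumes "sB \<sigma> + 1 \<noteq> k"
  shows "sB (step_with_coin i \<sigma> True) = sB \<sigma> + 1"
    and "sp (step_with_coin i \<sigma> True) = sp \<sigma>"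
    and "\<not> fresh (step_with_coin i \<sigma> True)"
  using assms by (simp_all add: step_with_coin_def Let_def)

lemma step_sample_ending_round:
  assumes "sB \<sigma> + 1 = k"
  shows "sB (step_with_coin i \<sigma> True) = 0"
    and "fresh (step_with_coin i \<sigma> True)"
  using assms by (simp_all add: step_with_coin_def Let_def)

lemma length_traj: "ts \<in> set_pmf (traj m \<sigma> N) \<Longrightarrow> length ts = N"
  by (induction N arbitrary: m \<sigma> ts) auto

lemma finite_traj: "finite (set_pmf (traj m \<sigma> N))"
  by (induction N arbitrary: m \<sigma>) (auto simp: rstep_eq_map_bernoulli)

lemma traj_add:
  "traj m \<sigma> (N1 + N2) =
     bind_pmf (traj m \<sigma> N1) (\<lambda>ts. map_pmf ((@) ts) (traj (m + N1) (final_state \<sigma> ts) N2))"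
proof (induction N1 arbitrary: m \<sigma>)
  case 0
  then show ?case
    by (simp add: bind_return_pmf map_pmf_ident[unfolded id_def] cong: map_pmf_cong)
next
  case (Suc N1)
  have "(@) (x # ts) = (\<lambda>us. x # ts @ us)" for x :: rstate and ts
    by auto
  then show ?case
    by (simp add: Suc bind_assoc_pmf map_bind_pmf bind_map_pmf map_pmf_comp bind_return_pmf)
qed

lemma run_eq_final_traj: "run n = map_pmf (final_state rinit) (traj 0 rinit n)"
proof (induction n)
  case 0
  then show ?case by simp
next
  case (Suc n)
  have "map_pmf (final_state rinit) (traj 0 rinit (n + 1)) =
      bind_pmf (traj 0 rinit n) (\<lambda>ts. rstep k eps c (s (Suc n)) (final_state rinit ts))"
    unfolding traj_add
    by (simp add: map_bind_pmf map_pmf_comp final_state_append bind_return_pmf')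
  also have "\<dots> = run (Suc n)"
    by (simp add: Suc bind_map_pmf)
  finally show ?case
    by simp
qed

lemma run_add: "run (m + N) = bind_pmf (run m) (\<lambda>\<sigma>. map_pmf (final_state \<sigma>) (traj m \<sigma> N))"
  unfolding run_eq_final_traj traj_add[of 0 rinit m N]
  by (simp add: map_bind_pmf map_pmf_comp bind_map_pmf final_state_append)

lemma finite_run: "finite (set_pmf (run n))"
  by (simp add: run_eq_final_traj finite_traj)

lemma take_traj: "map_pmf (take N1) (traj m \<sigma> (N1 + N2)) = traj m \<sigma> N1"
proof -
  have "map_pmf (take N1) (traj m \<sigma> (N1 + N2)) =
      bind_pmf (traj m \<sigma> N1)
        (\<lambda>ts. map_pmf (\<lambda>us. take N1 (ts @ us)) (traj (m + N1) (final_state \<sigma> ts) N2))"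
    unfolding traj_add by (simp add: map_bind_pmf map_pmf_comp)
  also have "\<dots> = bind_pmf (traj m \<sigma> N1) return_pmf"
    by (intro bind_pmf_cong refl) (simp add: length_traj)
  finally show ?thesis
    by (simp add: bind_return_pmf')
qed

lemma measure_traj_split:
  assumes "m \<le> n"
  shows "measure_pmf.prob (traj 0 rinit n) A =
    (\<integral>ts. measure_pmf.prob (traj m (final_state rinit ts) (n - m)) {us. ts @ us \<in> A}
      \<partial>traj 0 rinit m)"
  using assms traj_add[of 0 rinit m "n - m"] by (simp add: measure_pmf_prob_bind vimage_def)

lemma measure_traj_Suc:
  fixes j :: nat
  assumes "0 \<le> sp \<sigma>" "sp \<sigma> \<le> 1"
  defines "\<sigma>\<^sub>1 \<equiv> step_with_coin (s (Suc j)) \<sigma> True" and "\<sigma>\<^sub>0 \<equiv> step_with_coin (s (Suc j)) \<sigma> False"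
  shows "measure_pmf.prob (traj j \<sigma> (Suc N)) A =
    sp \<sigma> * measure_pmf.prob (traj (Suc j) \<sigma>\<^sub>1 N) {us. \<sigma>\<^sub>1 # us \<in> A}
  + (1 - sp \<sigma>) * measure_pmf.prob (traj (Suc j) \<sigma>\<^sub>0 N) {us. \<sigma>\<^sub>0 # us \<in> A}"
  using assms
  by (simp add: rstep_eq_map_bernoulli bind_map_pmf measure_pmf_prob_bind vimage_def mult.commute)

text \<open>The lower bound on \<open>sp\<close> holds because \<open>sp\<close> was last set at a round end with
\<open>nbar \<le> j\<close>.\<close>
definition run_inv :: "nat \<Rightarrow> rstate \<Rightarrow> bool" where
  "run_inv j \<sigma> \<longleftrightarrow> (\<Sum>i<k. cnt \<sigma> i) = j \<and> sB \<sigma> < k \<and>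
     sample_rate (max 1 j) \<le> sp \<sigma> \<and> sp \<sigma> \<le> 1"

lemma run_inv_sp_bounds:
  assumes "run_inv j \<sigma>"
  shows "0 \<le> sp \<sigma>" "sp \<sigma> \<le> 1" "sample_rate j \<le> sp \<sigma>"
proof -
  have "sample_rate 0 = 0"
    by (simp add: sample_rate_def)
  then have "sample_rate j \<le> sample_rate (max 1 j)"
    using sample_rate_nonneg[of 1] by (cases "j = 0") simp_all
  then show "0 \<le> sp \<sigma>" "sp \<sigma> \<le> 1" "sample_rate j \<le> sp \<sigma>"
    using assms sample_rate_nonneg[of "max 1 j"] unfolding run_inv_def by linarith+
qed

lemma sum_cnt_step:
  assumes "run_inv j \<sigma>"
  shows "(\<Sum>i<k. cnt (step_with_coin (s (Suc j)) \<sigma> b) i) = Suc j"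
proof -
  have "s (Suc j) < k"
    using valid by (simp add: valid_stream_def)
  then show ?thesis
    unfolding cnt_step_with_coin using sum_fun_upd_add[of "{..<k}" "s (Suc j)" "cnt \<sigma>" 1] assms
    by (simp add: run_inv_def)
qed

lemma sample_ending_round_rate:
  assumes "sB \<sigma> + 1 = k" "run_inv j \<sigma>"
  shows "sp (step_with_coin (s (Suc j)) \<sigma> True) = sample_rate (Suc j)"
proof -
  have "sp (step_with_coin (s (Suc j)) \<sigma> True) =
      min 1 (c * sqrt (real k) / (eps * real (\<Sum>i<k. cnt (step_with_coin (s (Suc j)) \<sigma> True) i)))"
    using assms(1) by (simp add: step_with_coin_def Let_def)
  then show ?thesis
    unfolding sum_cnt_step[OF assms(2)] by (simp add: sample_rate_def)
qed

lemma sample_ending_round_rate_le: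
  assumes "sB \<sigma> + 1 = k" "run_inv j \<sigma>" "a \<le> j"
  shows "sp (step_with_coin (s (Suc j)) \<sigma> True) \<le> sample_rate (Suc a)"
  unfolding sample_ending_round_rate[OF assms(1,2)] using assms(3) by (intro sample_rate_antimono) auto

lemma run_inv_step:
  assumes "run_inv j \<sigma>"
  shows "run_inv (Suc j) (step_with_coin (s (Suc j)) \<sigma> b)"
proof -
  note sum_cnt_step[OF assms]
  moreover have "sample_rate (max 1 (Suc j)) \<le> sample_rate (max 1 j)"
    by (intro sample_rate_antimono) auto
  ultimately show ?thesis
    using assms k_pos sample_ending_round_rate[OF _ assms] sample_rate_le_1
    by (cases b; cases "sB \<sigma> + 1 = k")
      (auto simp: run_inv_def step_sample_within_round step_sample_ending_round)
qed

lemma run_inv_run: "\<sigma> \<in> set_pmf (run n) \<Longrightarrow> run_inv n \<sigma>"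
proof (induction n arbitrary: \<sigma>)
  case 0
  then show ?case
    using k_pos by (simp add: run_inv_def rinit_def sample_rate_def)
next
  case (Suc n)
  then show ?case
    by (auto simp: rstep_eq_map_bernoulli intro: run_inv_step)
qed

text \<open>The potential \<open>2^(k-1-B)\<close> of the sample counter shrinks in expectation by the factor
\<open>1 - sp/2\<close> per event as long as no round ends.\<close>
lemma prob_no_round_end_le:
  assumes "0 \<le> r" "t \<le> N" "sB \<sigma> < k" "r \<le> sp \<sigma>" "sp \<sigma> \<le> 1"
  shows "measure_pmf.prob (traj j \<sigma> N) {us. \<forall>i<t. \<not> fresh (us ! i)}
    \<le> 2 ^ (k - 1 - sB \<sigma>) * (1 - r / 2) ^ t"
  using assms(2-)
proof (induction N arbitrary: t j \<sigma>)
  case 0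
  then show ?case
    by (simp add: order.trans[OF measure_pmf.prob_le_1])
next
  case (Suc N)
  show ?case
  proof (cases t)
    case 0
    then show ?thesis
      by (simp add: order.trans[OF measure_pmf.prob_le_1])
  next
    case (Suc t')
    define X where "X = (2::real) ^ (k - 1 - sB \<sigma>) * (1 - r / 2) ^ t'"
    define \<sigma>\<^sub>1 where "\<sigma>\<^sub>1 = step_with_coin (s (Suc j)) \<sigma> True"
    define \<sigma>\<^sub>0 where "\<sigma>\<^sub>0 = step_with_coin (s (Suc j)) \<sigma> False"
    let ?A = "{us. \<forall>i<t. \<not> fresh (us ! i)}"
    note none_fresh_Cons = all_less_Suc_nth_Cons[where P="\<lambda>x. \<not> fresh x"]
    have X_nonneg: "0 \<le> X"
      using Suc.prems unfolding X_def by simp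
    have without_sample: "measure_pmf.prob (traj (Suc j) \<sigma>\<^sub>0 N) {us. \<sigma>\<^sub>0 # us \<in> ?A} \<le> X"
      using Suc.IH[where t=t' and j="Suc j" and \<sigma>=\<sigma>\<^sub>0] Suc.prems \<open>t = Suc t'\<close>
      by (simp add: \<sigma>\<^sub>0_def X_def none_fresh_Cons)
    have with_sample: "measure_pmf.prob (traj (Suc j) \<sigma>\<^sub>1 N) {us. \<sigma>\<^sub>1 # us \<in> ?A} \<le> X / 2"
    proof (cases "sB \<sigma> + 1 = k")
      case True
      then show ?thesis
        using X_nonneg \<open>t = Suc t'\<close>
        by (simp add: \<sigma>\<^sub>1_def none_fresh_Cons step_sample_ending_round)
    next
      case False
      then have "k - 1 - sB \<sigma> = Suc (k - 1 - sB (step_with_coin (s (Suc j)) \<sigma> True))"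
        using Suc.prems by (simp add: step_sample_within_round)
      then show ?thesis
        using Suc.IH[where t=t' and j="Suc j" and \<sigma>=\<sigma>\<^sub>1] Suc.prems False \<open>t = Suc t'\<close>
        by (simp add: \<sigma>\<^sub>1_def X_def none_fresh_Cons step_sample_within_round)
    qed
    have "measure_pmf.prob (traj j \<sigma> (Suc N)) ?A \<le> sp \<sigma> * (X / 2) + (1 - sp \<sigma>) * X"
      unfolding measure_traj_Suc[OF order.trans[OF assms(1) Suc.prems(3)] Suc.prems(4)]
      using with_sample without_sample Suc.prems assms(1)
      by (intro add_mono mult_left_mono) (auto simp: \<sigma>\<^sub>0_def \<sigma>\<^sub>1_def)
    also have "\<dots> \<le> X * (1 - r / 2)"
      using X_nonneg Suc.prems by (simp add: algebra_simps mult_left_mono)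
    finally show ?thesis
      by (simp only: X_def \<open>t = Suc t'\<close> power_Suc2 mult.assoc)
  qed
qed

definition expected_round_starts :: "nat \<Rightarrow> rstate \<Rightarrow> nat \<Rightarrow> real" where
  "expected_round_starts j \<sigma> N = (\<Sum>i<N. measure_pmf.prob (traj j \<sigma> N) {us. fresh (us ! i)})"

lemma expected_round_starts_Suc:
  fixes j :: nat
  assumes "0 \<le> sp \<sigma>" "sp \<sigma> \<le> 1"
  defines "\<sigma>\<^sub>1 \<equiv> step_with_coin (s (Suc j)) \<sigma> True" and "\<sigma>\<^sub>0 \<equiv> step_with_coin (s (Suc j)) \<sigma> False"
  shows "expected_round_starts j \<sigma> (Suc N) =
    sp \<sigma> * (of_bool (fresh \<sigma>\<^sub>1) + expected_round_starts (Suc j) \<sigma>\<^sub>1 N)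
  + (1 - sp \<sigma>) * expected_round_starts (Suc j) \<sigma>\<^sub>0 N"
proof -
  have shift: "(\<Sum>i<Suc N. measure_pmf.prob Q {us. fresh ((x # us) ! i)}) =
      of_bool (fresh x) + (\<Sum>i<N. measure_pmf.prob Q {us. fresh (us ! i)})" for Q x
    by (subst sum.lessThan_Suc_shift) simp
  have "expected_round_starts j \<sigma> (Suc N) = (\<Sum>i<Suc N.
      sp \<sigma> * measure_pmf.prob (traj (Suc j) \<sigma>\<^sub>1 N) {us. fresh ((\<sigma>\<^sub>1 # us) ! i)}
    + (1 - sp \<sigma>) * measure_pmf.prob (traj (Suc j) \<sigma>\<^sub>0 N) {us. fresh ((\<sigma>\<^sub>0 # us) ! i)})"
    unfolding expected_round_starts_def \<sigma>\<^sub>0_def \<sigma>\<^sub>1_def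
    by (intro sum.cong refl) (subst measure_traj_Suc[OF assms(1,2)], simp)
  also have "\<dots> = sp \<sigma> * (of_bool (fresh \<sigma>\<^sub>1) + expected_round_starts (Suc j) \<sigma>\<^sub>1 N)
    + (1 - sp \<sigma>) * (of_bool (fresh \<sigma>\<^sub>0) + expected_round_starts (Suc j) \<sigma>\<^sub>0 N)"
    unfolding sum.distrib sum_distrib_left[symmetric] shift expected_round_starts_def ..
  finally show ?thesis
    by (simp add: \<sigma>\<^sub>0_def)
qed

text \<open>Once the sampling probability is at most \<open>\<rho>\<close>, the quantity \<open>B + k \<cdot> (round starts)\<close>
grows by one exactly on sampled events, i.e. at rate at most \<open>\<rho>\<close>.\<close>
lemma expected_round_starts_le_potential:
  assumes "run_inv j \<sigma>" "a \<le> j" "sp \<sigma> \<le> sample_rate (Suc a)"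
  shows "expected_round_starts j \<sigma> N \<le> (real (sB \<sigma>) + N * sample_rate (Suc a)) / k"
  using assms
proof (induction N arbitrary: j \<sigma>)
  case 0
  then show ?case
    by (simp add: expected_round_starts_def)
next
  case (Suc N)
  let ?\<rho> = "sample_rate (Suc a)"
  define \<sigma>\<^sub>1 where "\<sigma>\<^sub>1 = step_with_coin (s (Suc j)) \<sigma> True"
  define \<sigma>\<^sub>0 where "\<sigma>\<^sub>0 = step_with_coin (s (Suc j)) \<sigma> False"
  note sp_bounds = run_inv_sp_bounds[OF Suc.prems(1)]
  have k_real: "1 \<le> real k"
    using k_pos by simp
  have without_sample: "expected_round_starts (Suc j) \<sigma>\<^sub>0 N \<le> (real (sB \<sigma>) + N * ?\<rho>) / k"
    using Suc.IH[of "Suc j" \<sigma>\<^sub>0] Suc.prems run_inv_step by (simp add: \<sigma>\<^sub>0_def)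
  have with_sample: "of_bool (fresh \<sigma>\<^sub>1) + expected_round_starts (Suc j) \<sigma>\<^sub>1 N
      \<le> (real (sB \<sigma>) + 1 + N * ?\<rho>) / k"
  proof (cases "sB \<sigma> + 1 = k")
    case True
    have "sp \<sigma>\<^sub>1 \<le> ?\<rho>"
      unfolding \<sigma>\<^sub>1_def using sample_ending_round_rate_le[OF True Suc.prems(1,2)] .
    then have "expected_round_starts (Suc j) \<sigma>\<^sub>1 N \<le> N * ?\<rho> / k"
      using Suc.IH[of "Suc j" \<sigma>\<^sub>1] Suc.prems True run_inv_step
      by (simp add: \<sigma>\<^sub>1_def step_sample_ending_round)
    moreover have "real (sB \<sigma>) + 1 = real k"
      using True by linarith
    then have "(real (sB \<sigma>) + 1 + N * ?\<rho>) / k = 1 + N * ?\<rho> / k"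
      using k_real by (simp add: add_divide_distrib)
    ultimately show ?thesis
      using True by (simp add: \<sigma>\<^sub>1_def step_sample_ending_round)
  next
    case False
    then show ?thesis
      using Suc.IH[of "Suc j" \<sigma>\<^sub>1] Suc.prems run_inv_step
      by (simp add: \<sigma>\<^sub>1_def step_sample_within_round add.commute)
  qed
  have "expected_round_starts j \<sigma> (Suc N)
      \<le> sp \<sigma> * ((real (sB \<sigma>) + 1 + N * ?\<rho>) / k) + (1 - sp \<sigma>) * ((real (sB \<sigma>) + N * ?\<rho>) / k)"
    unfolding expected_round_starts_Suc[OF sp_bounds(1,2)]
    unfolding \<sigma>\<^sub>0_def[symmetric] \<sigma>\<^sub>1_def[symmetric]
    by (intro add_mono mult_left_mono with_sample without_sample) (simp_all add: sp_bounds)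
  also have "\<dots> = (real (sB \<sigma>) + N * ?\<rho> + sp \<sigma>) / k"
    using k_real by (simp add: field_simps)
  also have "\<dots> \<le> (real (sB \<sigma>) + Suc N * ?\<rho>) / k"
    using Suc.prems k_real by (intro divide_right_mono) (auto simp: algebra_simps)
  finally show ?case .
qed

text \<open>Only the first round end can happen at a sampling probability above \<open>\<rho>\<close>.\<close>
lemma expected_round_starts_le:
  assumes "run_inv j \<sigma>" "a \<le> j"
  shows "expected_round_starts j \<sigma> N \<le> 1 + N * sample_rate (Suc a) / k"
  using assms
proof (induction N arbitrary: j \<sigma>)
  case 0
  then show ?case
    by (simp add: expected_round_starts_def)
next
  case (Suc N)
  let ?\<rho> = "sample_rate (Suc a)"
  define \<sigma>\<^sub>1 where "\<sigma>\<^sub>1 = step_with_coin (s (Suc j)) \<sigma> True"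
  define \<sigma>\<^sub>0 where "\<sigma>\<^sub>0 = step_with_coin (s (Suc j)) \<sigma> False"
  note sp_bounds = run_inv_sp_bounds[OF Suc.prems(1)]
  have bound_mono: "1 + N * ?\<rho> / k \<le> 1 + Suc N * ?\<rho> / k"
    using sample_rate_nonneg k_pos by (simp add: divide_right_mono mult_right_mono)
  have without_sample: "expected_round_starts (Suc j) \<sigma>\<^sub>0 N \<le> 1 + N * ?\<rho> / k"
    using Suc.IH[of "Suc j" \<sigma>\<^sub>0] Suc.prems run_inv_step by (simp add: \<sigma>\<^sub>0_def)
  have with_sample: "of_bool (fresh \<sigma>\<^sub>1) + expected_round_starts (Suc j) \<sigma>\<^sub>1 N \<le> 1 + N * ?\<rho> / k"
  proof (cases "sB \<sigma> + 1 = k")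
    case True
    have "sp \<sigma>\<^sub>1 \<le> ?\<rho>"
      unfolding \<sigma>\<^sub>1_def using sample_ending_round_rate_le[OF True Suc.prems(1,2)] .
    then show ?thesis
      using expected_round_starts_le_potential[of "Suc j" \<sigma>\<^sub>1 a N] Suc.prems True run_inv_step
      by (simp add: \<sigma>\<^sub>1_def step_sample_ending_round)
  next
    case False
    then show ?thesis
      using Suc.IH[of "Suc j" \<sigma>\<^sub>1] Suc.prems run_inv_step
      by (simp add: \<sigma>\<^sub>1_def step_sample_within_round)
  qed
  have "expected_round_starts j \<sigma> (Suc N)
      \<le> sp \<sigma> * (1 + N * ?\<rho> / k) + (1 - sp \<sigma>) * (1 + N * ?\<rho> / k)"
    unfolding expected_round_starts_Suc[OF sp_bounds(1,2)]
    unfolding \<sigma>\<^sub>0_def[symmetric] \<sigma>\<^sub>1_def[symmetric]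
    by (intro add_mono mult_left_mono with_sample without_sample) (simp_all add: sp_bounds)
  also have "\<dots> = 1 + N * ?\<rho> / k"
    by (simp only: distrib_right[symmetric]) simp
  finally show ?case
    using bound_mono by linarith
qed

lemma accurate_if_round_good:
  assumes "length ts = m" "length us = n - m" "m < n" "round_good k eps m us"
    and "round_start_of n (ts @ us) m"
  shows "\<not> inaccurate n (state_at (ts @ us) n)"
proof -
  define j where "j = n - m - 1"
  have j: "j < length us" "m + j + 1 = n"
    using assms(2,3) unfolding j_def by auto
  have "\<not> fresh (us ! i)" if "i < j" for i
    using assms(5)[unfolded round_start_of_def, THEN conjunct2, rule_format, of "m + 1 + i"]
      state_at_append_gt[OF assms(1), of "m + 1 + i" us] that j by auto
  then have "\<bar>rest k (us ! j) - real (m + j + 1)\<bar> \<le> eps * real (m + j + 1)"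
    using assms(4) j(1) unfolding round_good_def by blast
  then have "\<bar>rest k (us ! j) - real n\<bar> \<le> eps * real n"
    unfolding j(2) .
  moreover have "state_at (ts @ us) n = us ! j"
    using state_at_append_gt[OF assms(1,3)] unfolding j_def by simp
  ultimately show ?thesis
    by (simp add: inaccurate_def)
qed

lemma prob_inaccurate_continuation_le:
  assumes "per_round_accurate k eps c \<delta>" "m < n" and ts: "ts \<in> set_pmf (traj 0 rinit m)"
  shows "measure_pmf.prob (traj m (final_state rinit ts) (n - m))
      {us. round_start_of n (ts @ us) m \<and> inaccurate n (state_at (ts @ us) n)}
    \<le> \<delta> * indicator {ts. fresh (final_state rinit ts)} ts"
proof -
  let ?\<sigma> = "final_state rinit ts"
  let ?traj = "traj m ?\<sigma> (n - m)"
  have len: "length ts = m"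
    using length_traj[OF ts] .
  show ?thesis
  proof (cases "fresh ?\<sigma>")
    case True
    have "?\<sigma> \<in> set_pmf (run m)"
      using ts by (simp add: run_eq_final_traj)
    from assms(1)[unfolded per_round_accurate_def, rule_format, OF valid this True, of "n - m"]
    have "1 - measure_pmf.prob ?traj {us. round_good k eps m us} \<le> \<delta>"
      by simp
    moreover have "measure_pmf.prob ?traj
        {us. round_start_of n (ts @ us) m \<and> inaccurate n (state_at (ts @ us) n)}
      \<le> measure_pmf.prob ?traj (- {us. round_good k eps m us})"
      using accurate_if_round_good[OF len length_traj assms(2)]
      by (intro measure_pmf_mono_on_support) auto
    ultimately show ?thesis
      using True measure_pmf.prob_compl[of "{us. round_good k eps m us}" ?traj]
      by (simp add: Compl_eq_Diff_UNIV)
  next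
    case False
    then have "measure_pmf.prob ?traj
        {us. round_start_of n (ts @ us) m \<and> inaccurate n (state_at (ts @ us) n)}
      \<le> measure_pmf.prob ?traj {}"
      using state_at_append_le[OF len, of m] state_at_length[OF len]
      by (intro measure_pmf_mono_on_support) (auto simp: round_start_of_def)
    then show ?thesis
      using False by simp
  qed
qed

lemma prob_inaccurate_round_le:
  assumes "per_round_accurate k eps c \<delta>" "m < n"
  shows "measure_pmf.prob (traj 0 rinit n)
      {ts. round_start_of n ts m \<and> inaccurate n (state_at ts n)}
    \<le> \<delta> * measure_pmf.prob (run m) {\<sigma>. fresh \<sigma>}"
proof -
  have "measure_pmf.prob (traj 0 rinit n) {ts. round_start_of n ts m \<and> inaccurate n (state_at ts n)}
    = (\<integral>ts. measure_pmf.prob (traj m (final_state rinit ts) (n - m))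
        {us. round_start_of n (ts @ us) m \<and> inaccurate n (state_at (ts @ us) n)} \<partial>traj 0 rinit m)"
    using assms(2) by (subst measure_traj_split) simp_all
  also have "\<dots> \<le> (\<integral>ts. \<delta> * indicator {ts. fresh (final_state rinit ts)} ts \<partial>traj 0 rinit m)"
    using assms
    by (intro integral_mono_finite_pmf finite_traj prob_inaccurate_continuation_le) simp_all
  also have "\<dots> = \<delta> * measure_pmf.prob (run m) {\<sigma>. fresh \<sigma>}"
    by (simp add: run_eq_final_traj vimage_def)
  finally show ?thesis .
qed

lemma prob_inaccurate_le_split:
  assumes "per_round_accurate k eps c \<delta>" "a < n"
  shows "measure_pmf.prob (run n) {\<sigma>. inaccurate n \<sigma>} \<le>
      measure_pmf.prob (traj 0 rinit n) {ts. \<forall>i\<in>{a..<n}. \<not> fresh (state_at ts i)}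
    + (\<Sum>m\<in>{a..<n}. \<delta> * measure_pmf.prob (run m) {\<sigma>. fresh \<sigma>})"
proof -
  let ?none = "{ts. \<forall>i\<in>{a..<n}. \<not> fresh (state_at ts i)}"
  let ?A = "\<lambda>m. {ts. round_start_of n ts m \<and> inaccurate n (state_at ts n)}"
  have "measure_pmf.prob (run n) {\<sigma>. inaccurate n \<sigma>} =
      measure_pmf.prob (traj 0 rinit n) {ts. inaccurate n (state_at ts n)}"
    unfolding run_eq_final_traj measure_map_pmf vimage_def
    by (intro measure_pmf_cong_on_support) (auto simp: state_at_length length_traj)
  also have "\<dots> \<le> measure_pmf.prob (traj 0 rinit n) (?none \<union> (\<Union>m\<in>{a..<n}. ?A m))"
    using exists_last_in_interval[of a n "\<lambda>i. fresh (state_at _ i)"]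
    by (intro measure_pmf_mono_on_support) (auto simp: round_start_of_def)
  also have "\<dots> \<le> measure_pmf.prob (traj 0 rinit n) ?none +
      (\<Sum>m\<in>{a..<n}. measure_pmf.prob (traj 0 rinit n) (?A m))"
    by (intro order.trans[OF measure_Un_le] add_mono order_refl
        measure_pmf.finite_measure_subadditive_finite) auto
  also have "\<dots> \<le> measure_pmf.prob (traj 0 rinit n) ?none +
      (\<Sum>m\<in>{a..<n}. \<delta> * measure_pmf.prob (run m) {\<sigma>. fresh \<sigma>})"
    using assms by (intro add_mono order_refl sum_mono prob_inaccurate_round_le) auto
  finally show ?thesis .
qed

lemma prob_no_round_start_le:
  assumes "a < n"
  shows "measure_pmf.prob (traj 0 rinit n) {ts. \<forall>i\<in>{a..<n}. \<not> fresh (state_at ts i)}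
    \<le> 2 ^ (k - 1) * (1 - sample_rate a / 2) ^ (n - 1 - a)"
proof -
  let ?r = "sample_rate a"
  let ?none = "{ts. \<forall>i\<in>{a..<n}. \<not> fresh (state_at ts i)}"
  have continuation_bound:
    "measure_pmf.prob (traj a (final_state rinit ts) (n - a)) {us. ts @ us \<in> ?none}
      \<le> 2 ^ (k - 1) * (1 - ?r / 2) ^ (n - 1 - a)" if ts: "ts \<in> set_pmf (traj 0 rinit a)" for ts
  proof -
    let ?\<sigma> = "final_state rinit ts"
    have len: "length ts = a"
      using length_traj[OF ts] .
    have inv: "run_inv a ?\<sigma>"
      using ts by (intro run_inv_run) (simp add: run_eq_final_traj)
    have "measure_pmf.prob (traj a ?\<sigma> (n - a)) {us. ts @ us \<in> ?none}
        \<le> measure_pmf.prob (traj a ?\<sigma> (n - a)) {us. \<forall>i<n - 1 - a. \<not> fresh (us ! i)}"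
    proof (intro measure_pmf_mono_on_support CollectI allI impI)
      fix us i
      assume "us \<in> {us. ts @ us \<in> ?none}" "i < n - 1 - a"
      then have "\<not> fresh (state_at (ts @ us) (a + 1 + i))"
        by auto
      then show "\<not> fresh (us ! i)"
        using state_at_append_gt[OF len, of "a + 1 + i" us] by simp
    qed
    also have "\<dots> \<le> 2 ^ (k - 1 - sB ?\<sigma>) * (1 - ?r / 2) ^ (n - 1 - a)"
      using inv run_inv_sp_bounds[OF inv] sample_rate_nonneg
      by (intro prob_no_round_end_le) (auto simp: run_inv_def)
    also have "\<dots> \<le> 2 ^ (k - 1) * (1 - ?r / 2) ^ (n - 1 - a)"
      using sample_rate_le_1[of a] by (intro mult_right_mono power_increasing) auto
    finally show ?thesis .
  qed
  have "measure_pmf.prob (traj 0 rinit n) ?none =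
      (\<integral>ts. measure_pmf.prob (traj a (final_state rinit ts) (n - a)) {us. ts @ us \<in> ?none}
        \<partial>traj 0 rinit a)"
    using assms by (intro measure_traj_split) simp
  also have "\<dots> \<le> (\<integral>ts. 2 ^ (k - 1) * (1 - ?r / 2) ^ (n - 1 - a) \<partial>traj 0 rinit a)"
    by (intro integral_mono_finite_pmf finite_traj continuation_bound)
  finally show ?thesis
    by simp
qed

lemma prob_no_round_start_small:
  assumes "a < n" "0 < q" "1 \<le> a \<longrightarrow> 2 * real k + 2 * ln (1 / q) \<le> real (n - 1 - a) * sample_rate a"
  shows "measure_pmf.prob (traj 0 rinit n) {ts. \<forall>i\<in>{a..<n}. \<not> fresh (state_at ts i)} \<le> q"
proof (cases "a = 0")
  case True
  then have none: "{ts. \<forall>i\<in>{a..<n}. \<not> fresh (state_at ts i)} = {}"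
    using assms(1) by (auto simp: state_at_def rinit_def)
  show ?thesis
    unfolding none using assms(2) by simp
next
  case False
  have "2 ^ (k - 1) * (1 - sample_rate a / 2) ^ (n - 1 - a) \<le> q"
    using False assms(2,3) sample_rate_nonneg sample_rate_le_1 by (intro two_power_mult_decay_le) auto
  then show ?thesis
    using prob_no_round_start_le[OF assms(1)] by linarith
qed

lemma prob_round_start_eq:
  assumes "i < N"
  shows "measure_pmf.prob (run (a + Suc i)) {\<sigma>. fresh \<sigma>} =
    (\<integral>\<sigma>. measure_pmf.prob (traj a \<sigma> N) {us. fresh (us ! i)} \<partial>run a)"
proof -
  have "measure_pmf.prob (run (a + Suc i)) {\<sigma>. fresh \<sigma>} =
      (\<integral>\<sigma>. measure_pmf.prob (traj a \<sigma> (Suc i)) {us. fresh (final_state \<sigma> us)} \<partial>run a)"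
    unfolding run_add measure_pmf_prob_bind measure_map_pmf vimage_def by simp
  also have "\<dots> = (\<integral>\<sigma>. measure_pmf.prob (traj a \<sigma> (Suc i)) {us. fresh (us ! i)} \<partial>run a)"
    by (intro Bochner_Integration.integral_cong refl measure_pmf_cong_on_support)
      (auto dest!: length_traj simp: final_state_def last_conv_nth)
  also have "\<dots> = (\<integral>\<sigma>. measure_pmf.prob (traj a \<sigma> N) {us. fresh (us ! i)} \<partial>run a)"
  proof -
    have "traj a \<sigma> (Suc i) = map_pmf (take (Suc i)) (traj a \<sigma> (Suc i + (N - Suc i)))" for \<sigma>
      by (simp only: take_traj)
    moreover have "take (Suc i) -` {us. fresh (us ! i)} = {us. fresh (us ! i)}"
      by auto
    ultimately show ?thesis
      using assms by (simp add: measure_map_pmf)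
  qed
  finally show ?thesis .
qed

lemma expected_round_starts_window_le:
  assumes "a < n"
  shows "(\<Sum>m\<in>{a..<n}. measure_pmf.prob (run m) {\<sigma>. fresh \<sigma>})
    \<le> 2 + real (n - a) * sample_rate (Suc a) / k"
proof -
  let ?f = "\<lambda>m. measure_pmf.prob (run m) {\<sigma>. fresh \<sigma>}"
  let ?\<rho> = "sample_rate (Suc a)"
  have "(\<Sum>m\<in>{a..<n}. ?f m) = ?f a + (\<Sum>m\<in>{Suc a..<n}. ?f m)"
    using assms by (rule sum.atLeast_Suc_lessThan)
  also have "(\<Sum>m\<in>{Suc a..<n}. ?f m) \<le> (\<Sum>i<n - a. ?f (a + Suc i))"
  proof -
    have "(\<Sum>m\<in>{Suc a..<n}. ?f m) \<le> (\<Sum>m\<in>{Suc a..<Suc n}. ?f m)"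
      by (intro sum_mono2) auto
    also have "{Suc a..<Suc n} = {0 + Suc a..<(n - a) + Suc a}"
      using assms by simp
    also have "(\<Sum>m\<in>{0 + Suc a..<(n - a) + Suc a}. ?f m) = (\<Sum>i<n - a. ?f (i + Suc a))"
      by (simp only: sum.shift_bounds_nat_ivl atLeast0LessThan)
    also have "\<dots> = (\<Sum>i<n - a. ?f (a + Suc i))"
      by (simp add: ac_simps)
    finally show ?thesis .
  qed
  also have "(\<Sum>i<n - a. ?f (a + Suc i)) =
      (\<Sum>i<n - a. \<integral>\<sigma>. measure_pmf.prob (traj a \<sigma> (n - a)) {us. fresh (us ! i)} \<partial>run a)"
    by (intro sum.cong refl prob_round_start_eq) simp
  also have "\<dots> = (\<integral>\<sigma>. expected_round_starts a \<sigma> (n - a) \<partial>run a)"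
    unfolding expected_round_starts_def
    by (intro Bochner_Integration.integral_sum[symmetric] integrable_measure_pmf_finite finite_run)
  also have "\<dots> \<le> (\<integral>\<sigma>. 1 + real (n - a) * ?\<rho> / k \<partial>run a)"
    by (intro integral_mono_finite_pmf finite_run expected_round_starts_le run_inv_run) auto
  also have "\<dots> = 1 + real (n - a) * ?\<rho> / k"
    by simp
  finally show ?thesis
    using measure_pmf.prob_le_1[of "run a" "{\<sigma>. fresh \<sigma>}"] by linarith
qed

lemma prob_inaccurate_le:
  assumes "per_round_accurate k eps c \<delta>" "0 \<le> \<delta>" "0 < \<pi>" "\<pi> < 1" "1 \<le> n"
    and \<delta>_small: "\<delta> * (8 + 2 * ln (1 / \<pi>)) \<le> \<pi> / 2"
  shows "measure_pmf.prob (run n) {\<sigma>. inaccurate n \<sigma>} \<le> \<pi>"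
proof -
  define K where "K = 2 * real k + 2 * ln (2 / \<pi>)"
  have ln_2_over: "ln (2 / \<pi>) = ln 2 + ln (1 / \<pi>)"
    using assms(3) ln_mult[of 2 "1 / \<pi>"] by simp
  have ln_pos: "0 < ln (1 / \<pi>)"
    using assms(3,4) by simp
  have "0 \<le> K"
    unfolding K_def ln_2_over using ln_pos by simp
  then obtain a where "a < n" and old: "1 \<le> a \<longrightarrow> K \<le> real (n - 1 - a) * sample_rate a"
    and recent: "real (n - a) * sample_rate (Suc a) \<le> K + 2"
    using exists_threshold[OF assms(5), of K sample_rate] sample_rate_le_1 by blast
  have "measure_pmf.prob (traj 0 rinit n) {ts. \<forall>i\<in>{a..<n}. \<not> fresh (state_at ts i)} \<le> \<pi> / 2"
    using \<open>a < n\<close> assms(3) old by (intro prob_no_round_start_small) (simp_all add: K_def)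
  moreover have "(\<Sum>m\<in>{a..<n}. \<delta> * measure_pmf.prob (run m) {\<sigma>. fresh \<sigma>}) \<le> \<pi> / 2"
  proof -
    have k_real: "1 \<le> real k"
      using k_pos by simp
    have "real (n - a) * sample_rate (Suc a) / k \<le> (K + 2) / k"
      using recent k_real by (intro divide_right_mono) auto
    also have "\<dots> = 2 + (2 * ln (2 / \<pi>) + 2) / k"
      unfolding K_def using k_real by (simp add: field_simps)
    also have "\<dots> \<le> 2 + (2 * ln (2 / \<pi>) + 2) / 1"
      using k_real ln_pos ln_2_over ln_ge_zero[of 2] by (intro add_left_mono divide_left_mono) auto
    finally have "2 + real (n - a) * sample_rate (Suc a) / k \<le> 8 + 2 * ln (1 / \<pi>)"
      unfolding ln_2_over using ln_2_less_1 by simp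
    then have "(\<Sum>m\<in>{a..<n}. \<delta> * measure_pmf.prob (run m) {\<sigma>. fresh \<sigma>}) \<le> \<delta> * (8 + 2 * ln (1 / \<pi>))"
      unfolding sum_distrib_left[symmetric]
      using expected_round_starts_window_le[OF \<open>a < n\<close>] assms(2)
      by (intro mult_left_mono) auto
    then show ?thesis
      using \<delta>_small by linarith
  qed
  ultimately show ?thesis
    using prob_inaccurate_le_split[OF assms(1) \<open>a < n\<close>] by linarith
qed

end

theorem mainTheorem9:
  shows "\<exists>C::real. C > 0 \<and>
    (\<forall>(\<pi>::real) (k::nat) (eps::real) (c::real).
       0 < \<pi> \<longrightarrow> \<pi> < 1 \<longrightarrow> k \<ge> 1 \<longrightarrow> eps > 0 \<longrightarrow> c \<ge> 1 \<longrightarrow>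
       per_round_accurate k eps c (\<pi> / (C * max 1 (ln (1 / \<pi>)))) \<longrightarrow>
       (\<forall>s n. valid_stream k s \<longrightarrow> n \<ge> 1 \<longrightarrow>
          measure_pmf.prob (rrun k eps c s n) {\<sigma>. \<bar>rest k \<sigma> - real n\<bar> > eps * real n} \<le> \<pi>))"
proof (intro exI[of _ 20] conjI allI impI)
  fix \<pi> eps c :: real and k n :: nat and s :: "nat \<Rightarrow> nat"
  assume "0 < \<pi>" "\<pi> < 1" "1 \<le> k" "0 < eps" "1 \<le> c" "1 \<le> n" "valid_stream k s"
    and accurate: "per_round_accurate k eps c (\<pi> / (20 * max 1 (ln (1 / \<pi>))))"
  interpret robust_run k eps c s
    using \<open>1 \<le> k\<close> \<open>0 < eps\<close> \<open>1 \<le> c\<close> \<open>valid_stream k s\<close> by unfold_locales simp_all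
  define M where "M = max 1 (ln (1 / \<pi>))"
  have "1 \<le> M"
    unfolding M_def by simp
  have "\<pi> / (20 * M) * (8 + 2 * ln (1 / \<pi>)) \<le> \<pi> / (20 * M) * (10 * M)"
    using \<open>0 < \<pi>\<close> \<open>1 \<le> M\<close> by (intro mult_left_mono) (auto simp: M_def)
  also have "\<dots> = \<pi> / 2"
    using \<open>1 \<le> M\<close> by simp
  finally show "measure_pmf.prob (rrun k eps c s n) {\<sigma>. \<bar>rest k \<sigma> - real n\<bar> > eps * real n} \<le> \<pi>"
    using prob_inaccurate_le[OF accurate[folded M_def]] \<open>0 < \<pi>\<close> \<open>\<pi> < 1\<close> \<open>1 \<le> n\<close> \<open>1 \<le> M\<close>
    by (simp add: inaccurate_def)
qed (simp)

end
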